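(* Fix $\delta>0$. Then $\lim_{l\to\infty}V_l^{\delta}=V^{\delta}$ on $\mathcal G_\delta\times[\underline{\lambda},\infty)$, and $\mathcal T(V^{\delta})(x_n^{\delta},\lambda)=V^{\delta}(x_n^{\delta},\lambda)$ for all $(x_n^\delta,\lambda)\in\mathcal G_\delta\times[\underline{\lambda},\infty)$.
   Context: Model: fix $p>0$, $q>0$, $d>0$, $\beta>0$, $\underline{\lambda}\ge0$ and distribution functions $F_U,F_Y$ of strictly positive random variables with finite expectation. For initial intensity $\lambda\ge\underline{\lambda}$, $\lambda_t=\underline{\lambda}+e^{-dt}(\lambda-\underline{\lambda})+\sum_{k=1}^{\widetilde N_t}Y_ke^{-d(t-T_k)}$ with $\widetilde N$ a rate-$\beta$ Poisson process (arrival times $T_k$) and $Y_k$ i.i.d. $\sim F_Y$ independent of $\widetilde N$; conditionally on $(\lambda_s)$, claims arrive as an inhomogeneous Poisson process $N_t$ with intensity $\lambda_t$, with i.i.d. sizes $U_j\sim F_U$ independent of everything else; surplus $X_t=x+pt-\sum_{j\le N_t}U_j$. The premium satisfies $p=(1+\eta)\mathbb E(U_1)\lambda_{\mathrm{av}}$, $\eta>0$, $\lambda_{\mathrm{av}}=\lim_t\mathbb E(\int_0^t\lambda_sds)/t$. Extended strategies: a pair $(L,\tau^F)$ with $L$ a dividend process (non-decreasing, càdlàg, adapted, $L_t\le X_t$ before ruin) and $\tau^F$ a stopping time at which all current surplus is paid and the business is closed; value $J((L,\tau^F);x,\lambda)=\mathbb E\big(\int_{0^-}^{\tau^L\wedge\tau^F}e^{-qt}dL_t+1_{\{\tau^F<\tau^L\}}e^{-q\tau^F}(X_{\tau^F}-L_{\tau^F})\big)$,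 $\tau^L=\inf\{t:X_t-L_{t^-}<0\}$. Discretization: for $\delta>0$, $\mathcal G_\delta=\{x_n^\delta=np\delta:n\ge0\}$, $\rho^\delta(x)=\max\{x_n^\delta\le x\}$. At state $(x_n^\delta,\lambda)$ let $\tau,U$ be the time until and size of the next claim, $T,Y$ the time until and size of the next intensity jump, $\lambda^c_t=\underline{\lambda}+e^{-dt}(\lambda-\underline{\lambda})$. Control actions: $\mathbf E_0$: pay nothing until $\delta\wedge\tau\wedge T$; if $\delta<\tau\wedge T$ new state $(x_{n+1}^\delta,\lambda^c_\delta)$; if $\tau\le\delta\wedge T$ and $y=x_n^\delta+p\tau-U<0$, ruin; if $y\ge0$ pay $y-\rho^\delta(y)$ and new state $(\rho^\delta(y),\lambda^c_\tau)$; if $T<\delta\wedge\tau$ pay $pT$ and new state $(x_n^\delta,\lambda^c_T+Y)$. $\mathbf E_1$ (only if $n\ge1$): pay $p\delta$, new state $(x_{n-1}^\delta,\lambda)$. $\mathbf E_F$: pay $x_n^\delta$ and close. $\widetilde\Pi^\delta_{x_n^\delta,\lambda}$: extended strategies obtained by finite or infinite sequences of these actions; $\widetilde\Pi^{\delta,l}_{x_n^\delta,\lambda}$: those obtained by a sequence of exactly $l$ control actions. $V^\delta(x_n^\delta,\lambda)=\sup_{\widetilde\Pi^\delta_{x_n^\delta,\lambda}}J$ and $V^\delta_l(x_n^\delta,\lambda)=\sup_{\widetilde\Pi^{\delta,l}_{x_n^\delta,\lambda}}J$. Operators on nonnegative Lebesgue measurable $w:\mathcal G_\delta\times[\underline{\lambda},\infty)\to[0,\infty)$: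 with $y=x_n^\delta+p\tau-U$, $\mathcal T_0(w)(x_n^\delta,\lambda)=\mathbb P(\delta\wedge T\wedge\tau=\delta)e^{-q\delta}w(x_{n+1}^\delta,\lambda^c_\delta)+\mathbb E\big(1_{\{\delta\wedge T\wedge\tau=\tau,\ y\ge0\}}e^{-q\tau}[w(\rho^\delta(y),\lambda^c_\tau)+y-\rho^\delta(y)]\big)+\mathbb E\big(1_{\{\delta\wedge T\wedge\tau=T\}}e^{-qT}[w(x_n^\delta,\lambda^c_T+Y)+pT]\big)$; $\mathcal T_1(w)(x_n^\delta,\lambda)=w(x_{n-1}^\delta,\lambda)+\delta p$ (for $n\ge1$); $\mathcal T_F(w)(x_n^\delta,\lambda)=x_n^\delta$; $\mathcal T=\max\{\mathcal T_0,\mathcal T_1,\mathcal T_F\}$ (with $\mathcal T_1$ omitted when $n=0$). *)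

theory Defs
  imports "HOL-Probability.Probability"
begin

text \<open>Parameters are always passed in the order  p q d beta ll delta MU MY,
  where ll is the lower intensity level, MU, MY the laws of claim sizes / intensity jumps.
  A grid point x_n = n p delta is represented by n :: nat.  A state is
  Some (n, lam) (surplus x_n, intensity lam) or None (business ruined or closed).\<close>

datatype action = E0 | E1 | EF | Stop

text \<open>Observation made during one step of action E0: (kind, time, size):
  kind 1 = a claim of size v at time t (t = tau <= delta and T);
  kind 2 = an intensity jump of size v at time t (t = T < delta and tau);
  any other kind (we use 0) = nothing happened up to time t = delta.\<close>
type_synonym obs = "nat \<times> real \<times> real"
type_synonym state = "(nat \<times> real) option"
type_synonym policy = "obs list \<Rightarrow> action"

text \<open>Deterministic intensity decay between jumps, and its integral.\<close>
definition lamc :: "real \<Rightarrow> real \<Rightarrow> real \<Rightarrow> real \<Rightarrow> real" where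
  "lamc d ll lam t = ll + exp (- d * t) * (lam - ll)"

definition Lamc :: "real \<Rightarrow> real \<Rightarrow> real \<Rightarrow> real \<Rightarrow> real" where
  "Lamc d ll lam t = (LBINT s=0..t. lamc d ll lam s)"

text \<open>Expectation of g(observation) for one step of E0 started with intensity lam:
  tau has hazard rate lamc, T is Exp(beta), independent, U ~ MU, Y ~ MY.\<close>
definition Estep :: "real \<Rightarrow> real \<Rightarrow> real \<Rightarrow> real \<Rightarrow> real measure \<Rightarrow> real measure
    \<Rightarrow> real \<Rightarrow> (obs \<Rightarrow> ennreal) \<Rightarrow> ennreal" where
  "Estep d beta ll delta MU MY lam g =
     ennreal (exp (- (beta * delta + Lamc d ll lam delta))) * g (0, delta, 0)
   + (\<integral>\<^sup>+ t. indicator {0..delta} t *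
        ennreal (lamc d ll lam t * exp (- (beta * t + Lamc d ll lam t)))
        * (\<integral>\<^sup>+ u. g (1, t, u) \<partial>MU) \<partial>lborel)
   + (\<integral>\<^sup>+ t. indicator {0..delta} t *
        ennreal (beta * exp (- (beta * t + Lamc d ll lam t)))
        * (\<integral>\<^sup>+ y. g (2, t, y) \<partial>MY) \<partial>lborel)"

text \<open>Index of rho^delta(y) = max grid point below y (for y >= 0).\<close>
definition rhoidx :: "real \<Rightarrow> real \<Rightarrow> real \<Rightarrow> nat" where
  "rhoidx p delta y = nat \<lfloor>y / (p * delta)\<rfloor>"

fun next0 :: "real \<Rightarrow> real \<Rightarrow> real \<Rightarrow> real \<Rightarrow> nat \<Rightarrow> real \<Rightarrow> obs \<Rightarrow> state" where
  "next0 p d ll delta n lam (k, t, v) =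
     (if k = 1 then
        (let y = real n * p * delta + p * t - v in
         if y < 0 then None else Some (rhoidx p delta y, lamc d ll lam t))
      else if k = 2 then Some (n, lamc d ll lam t + v)
      else Some (Suc n, lamc d ll lam delta))"

text \<open>Dividend paid (at the end of the step) during E0.\<close>
fun rew0 :: "real \<Rightarrow> real \<Rightarrow> nat \<Rightarrow> obs \<Rightarrow> real" where
  "rew0 p delta n (k, t, v) =
     (if k = 1 then
        (let y = real n * p * delta + p * t - v in
         if y < 0 then 0 else y - real (rhoidx p delta y) * p * delta)
      else if k = 2 then p * t
      else 0)"

fun disc0 :: "real \<Rightarrow> obs \<Rightarrow> real" where
  "disc0 q (k, t, v) = exp (- q * t)"

text \<open>Dummy observation recorded after the deterministic action E1.\<close>
definition dummy_obs :: obs where "dummy_obs = (3, 0, 0)"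

text \<open>Expected discounted dividends collected during the first l control actions of a
  (history dependent) policy.  Policies see the history of observations.\<close>
primrec Jval :: "real \<Rightarrow> real \<Rightarrow> real \<Rightarrow> real \<Rightarrow> real \<Rightarrow> real \<Rightarrow> real measure \<Rightarrow> real measure
    \<Rightarrow> nat \<Rightarrow> policy \<Rightarrow> state \<Rightarrow> ennreal" where
  "Jval p q d beta ll delta MU MY 0 = (\<lambda>pol s. 0)"
| "Jval p q d beta ll delta MU MY (Suc l) = (\<lambda>pol s.
     case s of None \<Rightarrow> 0
     | Some (n, lam) \<Rightarrow>
        (case pol [] of
           E0 \<Rightarrow> Estep d beta ll delta MU MY lam
                  (\<lambda>ob. ennreal (disc0 q ob) *
                     (ennreal (rew0 p delta n ob)
                      + Jval p q d beta ll delta MU MY l (\<lambda>h. pol (ob # h)) (next0 p d ll delta n lam ob)))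
         | E1 \<Rightarrow> (if 1 \<le> n then ennreal (p * delta)
                   + Jval p q d beta ll delta MU MY l (\<lambda>h. pol (dummy_obs # h)) (Some (n - 1, lam))
                  else 0)
         | EF \<Rightarrow> ennreal (real n * p * delta)
         | Stop \<Rightarrow> 0))"

text \<open>Admissibility during the first l actions: E1 only if n >= 1; Stop (i.e. the sequence of
  actions ends) only if allowed (finite sequences allowed for V, not for V_l).\<close>
primrec adm :: "real \<Rightarrow> real \<Rightarrow> real \<Rightarrow> real \<Rightarrow> bool \<Rightarrow> nat \<Rightarrow> policy \<Rightarrow> state \<Rightarrow> bool" where
  "adm p d ll delta stp 0 = (\<lambda>pol s. True)"
| "adm p d ll delta stp (Suc l) = (\<lambda>pol s.
     case s of None \<Rightarrow> True
     | Some (n, lam) \<Rightarrow>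
        (case pol [] of
           E0 \<Rightarrow> (\<forall>ob. adm p d ll delta stp l (\<lambda>h. pol (ob # h)) (next0 p d ll delta n lam ob))
         | E1 \<Rightarrow> 1 \<le> n \<and> adm p d ll delta stp l (\<lambda>h. pol (dummy_obs # h)) (Some (n - 1, lam))
         | EF \<Rightarrow> True
         | Stop \<Rightarrow> stp))"

text \<open>V^delta: finite or infinite sequences of actions; value of an infinite sequence is
  the (monotone) limit of the dividends of its first l actions.\<close>
definition Vdelta :: "real \<Rightarrow> real \<Rightarrow> real \<Rightarrow> real \<Rightarrow> real \<Rightarrow> real \<Rightarrow> real measure \<Rightarrow> real measure
    \<Rightarrow> nat \<Rightarrow> real \<Rightarrow> ennreal" where
  "Vdelta p q d beta ll delta MU MY n lam =
     (SUP pol \<in> {pol. \<forall>l. adm p d ll delta True l pol (Some (n, lam))}.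
        SUP l. Jval p q d beta ll delta MU MY l pol (Some (n, lam)))"

text \<open>V^delta_l: sequences of exactly l actions.\<close>
definition Vdelta_l :: "real \<Rightarrow> real \<Rightarrow> real \<Rightarrow> real \<Rightarrow> real \<Rightarrow> real \<Rightarrow> real measure \<Rightarrow> real measure
    \<Rightarrow> nat \<Rightarrow> nat \<Rightarrow> real \<Rightarrow> ennreal" where
  "Vdelta_l p q d beta ll delta MU MY l n lam =
     (SUP pol \<in> {pol. adm p d ll delta False l pol (Some (n, lam))}.
        Jval p q d beta ll delta MU MY l pol (Some (n, lam)))"

definition T0op :: "real \<Rightarrow> real \<Rightarrow> real \<Rightarrow> real \<Rightarrow> real \<Rightarrow> real \<Rightarrow> real measure \<Rightarrow> real measure
    \<Rightarrow> (nat \<Rightarrow> real \<Rightarrow> ennreal) \<Rightarrow> nat \<Rightarrow> real \<Rightarrow> ennreal" where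
  "T0op p q d beta ll delta MU MY w n lam =
     Estep d beta ll delta MU MY lam
       (\<lambda>ob. ennreal (disc0 q ob) *
          (ennreal (rew0 p delta n ob)
           + (case next0 p d ll delta n lam ob of None \<Rightarrow> 0 | Some (m, l) \<Rightarrow> w m l)))"

definition T1op :: "real \<Rightarrow> real \<Rightarrow> (nat \<Rightarrow> real \<Rightarrow> ennreal) \<Rightarrow> nat \<Rightarrow> real \<Rightarrow> ennreal" where
  "T1op p delta w n lam = w (n - 1) lam + ennreal (delta * p)"

definition TFop :: "real \<Rightarrow> real \<Rightarrow> nat \<Rightarrow> ennreal" where
  "TFop p delta n = ennreal (real n * p * delta)"

definition Top :: "real \<Rightarrow> real \<Rightarrow> real \<Rightarrow> real \<Rightarrow> real \<Rightarrow> real \<Rightarrow> real measure \<Rightarrow> real measure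
    \<Rightarrow> (nat \<Rightarrow> real \<Rightarrow> ennreal) \<Rightarrow> nat \<Rightarrow> real \<Rightarrow> ennreal" where
  "Top p q d beta ll delta MU MY w n lam =
     (if n = 0 then max (T0op p q d beta ll delta MU MY w n lam) (TFop p delta n)
      else max (max (T0op p q d beta ll delta MU MY w n lam) (T1op p delta w n lam)) (TFop p delta n))"

end

theory Submission
  imports Defs
begin

(* W_l, the value of exactly l actions, satisfies the Bellman recursion W_(l+1) = T W_l.
   Splitting a policy after its first action gives W_(l+1) <= T W_l.  Conversely, after a first
   action one may continue, at every possible next state, with an l-step policy whose value is
   close to W_l there; since policies depend arbitrarily on the history, no measurable selection
   is needed: it suffices to approximate W_l from below by measurable functions and to use
   monotone convergence inside T_0.  Replacing "stop" by "close" and padding finite action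
   sequences shows that W_l increases to V.  Monotone convergence also makes T continuous along
   increasing sequences of measurable functions, hence T V = sup_l T W_l = sup_l W_(l+1) = V. *)

lemma Lamc_closed_form:
  assumes "d \<noteq> 0"
  shows "Lamc d ll lam t = ll * t + (lam - ll) * (1 - exp (- d * t)) / d"
proof -
  define F where "F s = ll * s - (lam - ll) * exp (- d * s) / d" for s
  have F': "(F has_real_derivative lamc d ll lam s) (at s)" for s
  proof -
    have "(F has_real_derivative ll * 1 - (lam - ll) * (exp (- d * s) * (- d * 1)) / d) (at s)"
      unfolding F_def using assms by (intro derivative_eq_intros) auto
    moreover have "ll * 1 - (lam - ll) * (exp (- d * s) * (- d * 1)) / d = lamc d ll lam s"
      using assms by (simp add: lamc_def field_simps)
    ultimately show ?thesis by simp
  qed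
  have "Lamc d ll lam t = F t - F 0"
    unfolding Lamc_def zero_ereal_def
  proof (rule interval_integral_FTC_finite)
    show "continuous_on {min 0 t..max 0 t} (lamc d ll lam)"
      unfolding lamc_def by (intro continuous_intros)
    show "(F has_vector_derivative lamc d ll lam x) (at x within {min 0 t..max 0 t})" for x
      using F' by (simp add: has_real_derivative_iff_has_vector_derivative has_vector_derivative_at_within)
  qed
  also have "\<dots> = ll * t + (lam - ll) * (1 - exp (- d * t)) / d"
    using assms by (simp add: F_def field_simps)
  finally show ?thesis .
qed

lemma borel_measurable_lamc [measurable (raw)]:
  assumes [measurable]: "f \<in> borel_measurable M" "g \<in> borel_measurable M"
  shows "(\<lambda>x. lamc d ll (f x) (g x)) \<in> borel_measurable M"
  unfolding lamc_def by measurable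

lemma borel_measurable_Lamc:
  assumes "d \<noteq> 0" and [measurable]: "f \<in> borel_measurable M" "g \<in> borel_measurable M"
  shows "(\<lambda>x. Lamc d ll (f x) (g x)) \<in> borel_measurable M"
  unfolding Lamc_closed_form[OF assms(1)] by measurable

lemma Estep_mono:
  "(\<And>ob. g ob \<le> g' ob) \<Longrightarrow> Estep d beta ll delta MU MY lam g \<le> Estep d beta ll delta MU MY lam g'"
  unfolding Estep_def by (intro add_mono mult_left_mono nn_integral_mono) auto

lemma nn_integral_weighted_SUP:
  fixes f :: "nat \<Rightarrow> real \<Rightarrow> 'a \<Rightarrow> ennreal"
  assumes "sigma_finite_measure M" and inc: "\<And>t u. incseq (\<lambda>k. f k t u)"
    and meas: "\<And>k. case_prod (f k) \<in> borel_measurable (lborel \<Otimes>\<^sub>M M)"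
    and [measurable]: "a \<in> borel_measurable borel"
  shows "(\<integral>\<^sup>+t. a t * (\<integral>\<^sup>+u. (SUP k. f k t u) \<partial>M) \<partial>lborel)
       = (SUP k. \<integral>\<^sup>+t. a t * (\<integral>\<^sup>+u. f k t u \<partial>M) \<partial>lborel)"
proof -
  interpret sigma_finite_measure M by fact
  have [measurable]: "f k t \<in> borel_measurable M" for k t
    using measurable_Pair2[OF meas[of k]] by simp
  have [measurable]: "(\<lambda>t. \<integral>\<^sup>+u. f k t u \<partial>M) \<in> borel_measurable lborel" for k
    using borel_measurable_nn_integral[OF meas[of k]] by simp
  have "incseq (\<lambda>k. f k t)" for t
    using inc by (simp add: incseq_def le_fun_def)
  then have "(\<integral>\<^sup>+t. a t * (\<integral>\<^sup>+u. (SUP k. f k t u) \<partial>M) \<partial>lborel)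
      = (\<integral>\<^sup>+t. (SUP k. a t * (\<integral>\<^sup>+u. f k t u \<partial>M)) \<partial>lborel)"
    by (simp add: nn_integral_monotone_convergence_SUP SUP_mult_left_ennreal)
  also have "\<dots> = (SUP k. \<integral>\<^sup>+t. a t * (\<integral>\<^sup>+u. f k t u \<partial>M) \<partial>lborel)"
    using inc
    by (intro nn_integral_monotone_convergence_SUP)
       (auto simp: incseq_def le_fun_def intro!: mult_left_mono nn_integral_mono)
  finally show ?thesis .
qed

lemma Estep_SUP:
  fixes g :: "nat \<Rightarrow> obs \<Rightarrow> ennreal"
  assumes d: "d \<noteq> 0" and MU: "sigma_finite_measure MU" and MY: "sigma_finite_measure MY"
    and inc: "\<And>ob. incseq (\<lambda>k. g k ob)"
    and g1: "\<And>k. (\<lambda>(t, u). g k (1, t, u)) \<in> borel_measurable (lborel \<Otimes>\<^sub>M MU)"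
    and g2: "\<And>k. (\<lambda>(t, y). g k (2, t, y)) \<in> borel_measurable (lborel \<Otimes>\<^sub>M MY)"
  shows "Estep d beta ll delta MU MY lam (\<lambda>ob. SUP k. g k ob)
       = (SUP k. Estep d beta ll delta MU MY lam (g k))"
proof -
  note [measurable] = borel_measurable_Lamc[OF d]
  define a0 where "a0 = ennreal (exp (- (beta * delta + Lamc d ll lam delta)))"
  define a1 where "a1 t = indicator {0..delta} t * ennreal (lamc d ll lam t * exp (- (beta * t + Lamc d ll lam t)))" for t
  define a2 where "a2 t = indicator {0..delta} t * ennreal (beta * exp (- (beta * t + Lamc d ll lam t)))" for t
  define A where "A k = a0 * g k (0, delta, 0)" for k
  define B where "B k = (\<integral>\<^sup>+t. a1 t * (\<integral>\<^sup>+u. g k (1, t, u) \<partial>MU) \<partial>lborel)" for k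
  define C where "C k = (\<integral>\<^sup>+t. a2 t * (\<integral>\<^sup>+y. g k (2, t, y) \<partial>MY) \<partial>lborel)" for k
  have [measurable]: "a1 \<in> borel_measurable borel" "a2 \<in> borel_measurable borel"
    unfolding a1_def a2_def by measurable
  have Estep_ABC: "Estep d beta ll delta MU MY lam (g k) = A k + B k + C k" for k
    unfolding Estep_def A_def B_def C_def a0_def a1_def a2_def ..
  have "incseq A" "incseq B" "incseq C"
    using inc unfolding A_def B_def C_def incseq_def
    by (auto intro!: mult_left_mono nn_integral_mono)
  moreover from \<open>incseq A\<close> \<open>incseq B\<close> have "incseq (\<lambda>k. A k + B k)"
    by (auto simp: incseq_def intro: add_mono)
  ultimately have "(SUP k. A k) + (SUP k. B k) + (SUP k. C k) = (SUP k. A k + B k + C k)"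
    by (simp add: ennreal_SUP_add)
  moreover have "Estep d beta ll delta MU MY lam (\<lambda>ob. SUP k. g k ob)
      = (SUP k. A k) + (SUP k. B k) + (SUP k. C k)"
    unfolding Estep_def A_def B_def C_def a0_def[symmetric] a1_def[symmetric] a2_def[symmetric]
    using nn_integral_weighted_SUP[OF MU, of "\<lambda>k t u. g k (1, t, u)" a1]
      nn_integral_weighted_SUP[OF MY, of "\<lambda>k t y. g k (2, t, y)" a2] inc g1 g2
    by (simp add: SUP_mult_left_ennreal)
  ultimately show ?thesis
    unfolding Estep_ABC by simp
qed

lemma borel_measurable_Estep:
  fixes g :: "real \<Rightarrow> obs \<Rightarrow> ennreal"
  assumes d: "d \<noteq> 0" and MU: "sigma_finite_measure MU" and MY: "sigma_finite_measure MY"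
    and [measurable]: "(\<lambda>lam. g lam (0, delta, 0)) \<in> borel_measurable borel"
    and g1: "(\<lambda>x. g (fst (fst x)) (1, snd (fst x), snd x)) \<in> borel_measurable ((borel \<Otimes>\<^sub>M lborel) \<Otimes>\<^sub>M MU)"
    and g2: "(\<lambda>x. g (fst (fst x)) (2, snd (fst x), snd x)) \<in> borel_measurable ((borel \<Otimes>\<^sub>M lborel) \<Otimes>\<^sub>M MY)"
  shows "(\<lambda>lam. Estep d beta ll delta MU MY lam (g lam)) \<in> borel_measurable borel"
proof -
  note [measurable] = borel_measurable_Lamc[OF d]
  have [measurable]: "(\<lambda>x. \<integral>\<^sup>+u. g (fst x) (1, snd x, u) \<partial>MU) \<in> borel_measurable (borel \<Otimes>\<^sub>M lborel)"
    using sigma_finite_measure.borel_measurable_nn_integral[OF MU, of "\<lambda>x u. g (fst x) (1, snd x, u)"] g1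
    by (simp add: split_beta')
  have [measurable]: "(\<lambda>x. \<integral>\<^sup>+y. g (fst x) (2, snd x, y) \<partial>MY) \<in> borel_measurable (borel \<Otimes>\<^sub>M lborel)"
    using sigma_finite_measure.borel_measurable_nn_integral[OF MY, of "\<lambda>x y. g (fst x) (2, snd x, y)"] g2
    by (simp add: split_beta')
  have outer: "(\<lambda>lam. \<integral>\<^sup>+t. F lam t \<partial>lborel) \<in> borel_measurable borel"
    if "(\<lambda>x. F (fst x) (snd x)) \<in> borel_measurable (borel \<Otimes>\<^sub>M lborel)" for F
    using sigma_finite_measure.borel_measurable_nn_integral[OF sigma_finite_lborel, of F] that
    by (simp add: split_beta')
  show ?thesis
    unfolding Estep_def by (measurable; (rule outer, measurable)?)
qed

(* Near-optimal policies exist only for values strictly below W_l; these approximations are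
   measurable and increase to their argument, also at infinity. *)
definition approx_below :: "nat \<Rightarrow> ennreal \<Rightarrow> ennreal" where
  "approx_below k x = (if x = \<top> then of_nat k else x * ennreal (1 - 1 / (real k + 2)))"

lemma borel_measurable_approx_below [measurable (raw)]:
  assumes [measurable]: "f \<in> borel_measurable M"
  shows "(\<lambda>x. approx_below k (f x)) \<in> borel_measurable M"
  unfolding approx_below_def by measurable

lemma incseq_approx_below: "incseq (\<lambda>k. approx_below k x)"
  unfolding approx_below_def incseq_def
  by (auto intro!: mult_left_mono ennreal_leI simp: field_simps)

lemma SUP_approx_below: "(SUP k. approx_below k x) = x"
proof (cases "x = \<top>")
  case True
  then show ?thesis unfolding approx_below_def using ennreal_SUP_of_nat_eq_top by simp
next
  case False
  have "(\<lambda>k. 1 - 1 / (real k + 2)) \<longlonglongrightarrow> 1 - 0"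
    using LIMSEQ_ignore_initial_segment[OF lim_1_over_n, of 2]
    by (intro tendsto_intros) (simp add: add.commute)
  then have "(\<lambda>k. ennreal (1 - 1 / (real k + 2))) \<longlonglongrightarrow> ennreal 1"
    by (intro tendsto_ennrealI) simp
  moreover have "incseq (\<lambda>k. ennreal (1 - 1 / (real k + 2)))"
    unfolding incseq_def by (auto intro!: ennreal_leI simp: field_simps)
  ultimately have "(SUP k. ennreal (1 - 1 / (real k + 2))) = 1"
    using LIMSEQ_SUP LIMSEQ_unique by fastforce
  with False show ?thesis
    unfolding approx_below_def by (simp add: SUP_mult_left_ennreal[symmetric])
qed

lemma approx_below_less: "approx_below k x \<noteq> 0 \<Longrightarrow> approx_below k x < x"
proof (cases "x = \<top>")
  case True then show ?thesis unfolding approx_below_def by (simp add: of_nat_less_top)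
next
  case False
  then obtain r where r: "x = ennreal r" "0 \<le> r" by (cases x) auto
  have c: "0 \<le> 1 - 1 / (real k + 2)" "1 - 1 / (real k + 2) < 1"
    by (simp_all add: field_simps)
  assume "approx_below k x \<noteq> 0"
  with r False have "0 < r"
    unfolding approx_below_def by (cases "r = 0") auto
  then have "r * (1 - 1 / (real k + 2)) < r"
    using c by (simp add: mult_less_cancel_left1)
  with r c \<open>0 < r\<close> show ?thesis
    unfolding approx_below_def by (simp add: ennreal_mult[symmetric] ennreal_lessI)
qed

definition truncate_pol :: "nat \<Rightarrow> action \<Rightarrow> policy \<Rightarrow> policy" where
  "truncate_pol l a pol = (\<lambda>h. if length h < l then pol h else a)"

lemma truncate_pol_0 [simp]: "truncate_pol 0 a pol = (\<lambda>_. a)"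
  by (simp add: truncate_pol_def)

lemma truncate_pol_Suc_Nil [simp]: "truncate_pol (Suc l) a pol [] = pol []"
  by (simp add: truncate_pol_def)

lemma truncate_pol_Suc_Cons [simp]:
  "(\<lambda>h. truncate_pol (Suc l) a pol (ob # h)) = truncate_pol l a (\<lambda>h. pol (ob # h))"
  by (simp add: truncate_pol_def)

definition stop_to_close :: "policy \<Rightarrow> policy" where
  "stop_to_close pol = (\<lambda>h. if pol h = Stop then EF else pol h)"

lemma stop_to_close_Nil [simp]:
  "stop_to_close pol [] = (if pol [] = Stop then EF else pol [])"
  by (simp add: stop_to_close_def)

lemma stop_to_close_Cons [simp]:
  "(\<lambda>h. stop_to_close pol (ob # h)) = stop_to_close (\<lambda>h. pol (ob # h))"
  by (simp add: stop_to_close_def)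

definition act_then :: "action \<Rightarrow> (obs \<Rightarrow> policy) \<Rightarrow> policy" where
  "act_then a P = (\<lambda>h. case h of [] \<Rightarrow> a | ob # h' \<Rightarrow> P ob h')"

lemma act_then_Nil [simp]: "act_then a P [] = a"
  by (simp add: act_then_def)

lemma act_then_Cons [simp]: "(\<lambda>h. act_then a P (ob # h)) = P ob"
  by (simp add: act_then_def)

context
  fixes p q d beta ll delta :: real and MU MY :: "real measure"
begin

abbreviation "J \<equiv> Jval p q d beta ll delta MU MY"
abbreviation "Adm \<equiv> adm p d ll delta"

lemma Jval_None [simp]: "J l pol None = 0"
  by (cases l) auto

lemma adm_None [simp]: "Adm stp l pol None"
  by (cases l) auto

lemma Jval_Some_Suc: "J (Suc l) pol (Some (n, lam)) = (case pol [] of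
      E0 \<Rightarrow> Estep d beta ll delta MU MY lam
             (\<lambda>ob. ennreal (disc0 q ob) * (ennreal (rew0 p delta n ob)
                    + J l (\<lambda>h. pol (ob # h)) (next0 p d ll delta n lam ob)))
    | E1 \<Rightarrow> (if 1 \<le> n then ennreal (p * delta) + J l (\<lambda>h. pol (dummy_obs # h)) (Some (n - 1, lam))
            else 0)
    | EF \<Rightarrow> ennreal (real n * p * delta)
    | Stop \<Rightarrow> 0)"
  by simp

lemma adm_Some_Suc [simp]: "Adm stp (Suc l) pol (Some (n, lam)) = (case pol [] of
      E0 \<Rightarrow> (\<forall>ob. Adm stp l (\<lambda>h. pol (ob # h)) (next0 p d ll delta n lam ob))
    | E1 \<Rightarrow> 1 \<le> n \<and> Adm stp l (\<lambda>h. pol (dummy_obs # h)) (Some (n - 1, lam))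
    | EF \<Rightarrow> True
    | Stop \<Rightarrow> stp)"
  by simp

declare Jval.simps(2) [simp del] adm.simps(2) [simp del] next0.simps [simp del]

lemma Jval_le_Suc: "J l pol s \<le> J (Suc l) pol s"
proof (induction l arbitrary: pol s)
  case (Suc l)
  then show ?case
    by (cases s; cases "pol []")
       (auto simp: Jval_Some_Suc[of _ pol] split: prod.split
             intro!: Estep_mono mult_left_mono add_left_mono)
qed simp

lemma Jval_truncate_pol: "J l (truncate_pol l a pol) s = J l pol s"
proof (induction l arbitrary: pol s)
  case (Suc l)
  then show ?case by (cases s) (auto simp: Jval_Some_Suc split: action.split)
qed simp

lemma Jval_le_stop_to_close: "J l pol s \<le> J l (stop_to_close pol) s"
proof (induction l arbitrary: pol s)
  case (Suc l)
  then show ?case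
    by (cases s; cases "pol []")
       (auto simp: Jval_Some_Suc split: prod.split intro!: Estep_mono mult_left_mono add_left_mono)
qed simp

lemma adm_stop_to_close: "Adm stp l pol s \<Longrightarrow> Adm False l (stop_to_close pol) s"
proof (induction l arbitrary: pol s)
  case (Suc l)
  then show ?case
    by (cases s; cases "pol []") (auto split: prod.splits)
qed simp

lemma adm_False_imp_True: "Adm False l pol s \<Longrightarrow> Adm True l pol s"
proof (induction l arbitrary: pol s)
  case (Suc l)
  then show ?case by (cases s; cases "pol []") (auto split: prod.splits)
qed simp

lemma adm_const_EF: "Adm stp l (\<lambda>_. EF) s"
  by (cases l; cases s) auto

lemma adm_const_Stop: "Adm True l (\<lambda>_. Stop) s"
  by (cases l; cases s) auto

lemma adm_truncate_pol:
  assumes "\<And>l s. Adm stp l (\<lambda>_. a) s" and "Adm stp l pol s"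
  shows "Adm stp k (truncate_pol l a pol) s"
  using assms(2)
proof (induction l arbitrary: pol s k)
  case (Suc l)
  then show ?case by (cases k; cases s; cases "pol []") (auto split: prod.splits)
qed (simp add: assms(1))

abbreviation "V \<equiv> Vdelta p q d beta ll delta MU MY"
abbreviation "W \<equiv> Vdelta_l p q d beta ll delta MU MY"

lemma Jval_le_W: "Adm False l pol (Some (n, lam)) \<Longrightarrow> J l pol (Some (n, lam)) \<le> W l n lam"
  unfolding Vdelta_l_def by (rule SUP_upper) simp

lemma W_le_V: "W l n lam \<le> V n lam"
  unfolding Vdelta_l_def
proof (rule SUP_least)
  fix pol assume "pol \<in> {pol. Adm False l pol (Some (n, lam))}"
  then have "Adm True l pol (Some (n, lam))" by (simp add: adm_False_imp_True)
  then have "Adm True k (truncate_pol l Stop pol) (Some (n, lam))" for k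
    by (rule adm_truncate_pol[OF adm_const_Stop])
  then have "(SUP k. J k (truncate_pol l Stop pol) (Some (n, lam))) \<le> V n lam"
    unfolding Vdelta_def by (intro SUP_upper) simp
  moreover have "J l pol (Some (n, lam)) \<le> (SUP k. J k (truncate_pol l Stop pol) (Some (n, lam)))"
    by (rule SUP_upper2[of l]) (simp_all add: Jval_truncate_pol)
  ultimately show "J l pol (Some (n, lam)) \<le> V n lam"
    by (rule order_trans[rotated])
qed

lemma V_le_SUP_W: "V n lam \<le> (SUP l. W l n lam)"
  unfolding Vdelta_def
proof (intro SUP_least)
  fix pol l assume "pol \<in> {pol. \<forall>l. Adm True l pol (Some (n, lam))}"
  then have "Adm False l (stop_to_close pol) (Some (n, lam))"
    using adm_stop_to_close[of True l pol] by simp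
  then have "J l (stop_to_close pol) (Some (n, lam)) \<le> W l n lam"
    by (rule Jval_le_W)
  then have "J l pol (Some (n, lam)) \<le> W l n lam"
    using Jval_le_stop_to_close order_trans by blast
  then show "J l pol (Some (n, lam)) \<le> (SUP l. W l n lam)"
    by (rule SUP_upper2[OF UNIV_I])
qed

lemma V_eq_SUP_W: "V n lam = (SUP l. W l n lam)"
  by (intro antisym V_le_SUP_W SUP_least W_le_V)

lemma W_le_W_Suc: "W l n lam \<le> W (Suc l) n lam"
proof -
  have extend: "J l pol (Some (n, lam)) \<le> W (Suc l) n lam" if "Adm False l pol (Some (n, lam))" for pol
  proof -
    have "Adm False (Suc l) (truncate_pol l EF pol) (Some (n, lam))"
      by (rule adm_truncate_pol[OF adm_const_EF that])
    then have "J (Suc l) (truncate_pol l EF pol) (Some (n, lam)) \<le> W (Suc l) n lam"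
      by (rule Jval_le_W)
    then show ?thesis
      using Jval_le_Suc[of l "truncate_pol l EF pol"] Jval_truncate_pol order_trans by metis
  qed
  show ?thesis
    unfolding Vdelta_l_def[of _ _ _ _ _ _ _ _ l] by (rule SUP_least) (simp add: extend)
qed

lemma incseq_W: "incseq (\<lambda>l. W l n lam)"
  by (rule incseq_SucI) (rule W_le_W_Suc)

lemma W_tendsto_V: "(\<lambda>l. W l n lam) \<longlonglongrightarrow> V n lam"
  unfolding V_eq_SUP_W by (rule LIMSEQ_SUP[OF incseq_W])

lemma W_0: "W 0 n lam = 0"
  by (simp add: Vdelta_l_def)

abbreviation "T0 \<equiv> T0op p q d beta ll delta MU MY"
abbreviation "TT \<equiv> Top p q d beta ll delta MU MY"

definition T0_integrand :: "(nat \<Rightarrow> real \<Rightarrow> ennreal) \<Rightarrow> nat \<Rightarrow> real \<Rightarrow> obs \<Rightarrow> ennreal" where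
  "T0_integrand w n lam ob = ennreal (disc0 q ob) * (ennreal (rew0 p delta n ob)
     + (case next0 p d ll delta n lam ob of None \<Rightarrow> 0 | Some (m, la) \<Rightarrow> w m la))"

lemma T0op_eq_Estep: "T0 w n lam = Estep d beta ll delta MU MY lam (T0_integrand w n lam)"
  unfolding T0op_def T0_integrand_def ..

lemma T0_integrand_claim: "T0_integrand w n lam (1, t, u) =
    (let y = real n * p * delta + p * t - u in
     if y < 0 then 0
     else ennreal (exp (- q * t)) * (ennreal (y - real (rhoidx p delta y) * p * delta)
            + w (rhoidx p delta y) (lamc d ll lam t)))"
  by (simp add: T0_integrand_def next0.simps Let_def)

lemma T0_integrand_jump:
  "T0_integrand w n lam (2, t, y) = ennreal (exp (- q * t)) * (ennreal (p * t) + w n (lamc d ll lam t + y))"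
  by (simp add: T0_integrand_def next0.simps)

lemma T0_integrand_no_event:
  "T0_integrand w n lam (0, t, v) = ennreal (exp (- q * t)) * w (Suc n) (lamc d ll lam delta)"
  by (simp add: T0_integrand_def next0.simps)

lemma borel_measurable_T0_integrand_claim:
  assumes w: "\<And>m. w m \<in> borel_measurable borel"
    and [measurable]: "L \<in> borel_measurable M" "S \<in> borel_measurable M" "U \<in> borel_measurable M"
  shows "(\<lambda>x. T0_integrand w n (L x) (1, S x, U x)) \<in> borel_measurable M"
proof -
  have idx: "(\<lambda>x. rhoidx p delta (real n * p * delta + p * S x - U x)) \<in> M \<rightarrow>\<^sub>M count_space UNIV"
    unfolding rhoidx_def by measurable
  have [measurable]: "(\<lambda>x. real (rhoidx p delta (real n * p * delta + p * S x - U x))) \<in> borel_measurable M"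
    unfolding rhoidx_def by measurable
  have [measurable]:
    "(\<lambda>x. w (rhoidx p delta (real n * p * delta + p * S x - U x)) (lamc d ll (L x) (S x))) \<in> borel_measurable M"
    by (rule measurable_compose_countable[OF _ idx], rule measurable_compose[OF _ w]) measurable
  show ?thesis
    unfolding T0_integrand_claim Let_def by measurable
qed

lemma borel_measurable_T0_integrand_jump:
  assumes w: "\<And>m. w m \<in> borel_measurable borel"
    and [measurable]: "L \<in> borel_measurable M" "S \<in> borel_measurable M" "Y \<in> borel_measurable M"
  shows "(\<lambda>x. T0_integrand w n (L x) (2, S x, Y x)) \<in> borel_measurable M"
proof -
  have [measurable]: "(\<lambda>x. w n (lamc d ll (L x) (S x) + Y x)) \<in> borel_measurable M"
    by (rule measurable_compose[OF _ w]) measurable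
  show ?thesis
    unfolding T0_integrand_jump by measurable
qed

lemma T0_integrand_mono:
  "(\<And>m la. w m la \<le> w' m la) \<Longrightarrow> T0_integrand w n lam ob \<le> T0_integrand w' n lam ob"
  unfolding T0_integrand_def by (intro mult_left_mono add_left_mono) (auto split: option.split)

lemma T0op_mono: "(\<And>m la. w m la \<le> w' m la) \<Longrightarrow> T0 w n lam \<le> T0 w' n lam"
  unfolding T0op_eq_Estep by (intro Estep_mono T0_integrand_mono)

lemma T0_integrand_SUP:
  "T0_integrand (\<lambda>m la. SUP k. w k m la) n lam ob = (SUP k. T0_integrand (w k) n lam ob)"
  unfolding T0_integrand_def
  by (auto split: option.split simp: ennreal_SUP_add_right SUP_mult_left_ennreal)

lemma T0_le_Top: "T0 w n lam \<le> TT w n lam"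
  unfolding Top_def by (simp add: le_max_iff_disj)

lemma T1_le_Top: "n \<noteq> 0 \<Longrightarrow> T1op p delta w n lam \<le> TT w n lam"
  unfolding Top_def by (simp add: le_max_iff_disj)

lemma TF_le_Top: "TFop p delta n \<le> TT w n lam"
  unfolding Top_def by (simp add: le_max_iff_disj)

lemma W_Suc_le_Top: "W (Suc l) n lam \<le> TT (W l) n lam"
proof -
  have "J (Suc l) pol (Some (n, lam)) \<le> TT (W l) n lam" if adm: "Adm False (Suc l) pol (Some (n, lam))" for pol
  proof (cases "pol []")
    case E0
    have "J l (\<lambda>h. pol (ob # h)) (next0 p d ll delta n lam ob)
        \<le> (case next0 p d ll delta n lam ob of None \<Rightarrow> 0 | Some (m, la) \<Rightarrow> W l m la)" for ob
    proof -
      have "Adm False l (\<lambda>h. pol (ob # h)) (next0 p d ll delta n lam ob)"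
        using adm E0 by (cases ob) simp
      then show ?thesis
        by (cases "next0 p d ll delta n lam ob") (auto intro: Jval_le_W)
    qed
    then have "J (Suc l) pol (Some (n, lam)) \<le> T0 (W l) n lam"
      unfolding Jval_Some_Suc E0 T0op_def by (auto intro!: Estep_mono mult_left_mono add_left_mono)
    then show ?thesis
      using T0_le_Top order_trans by blast
  next
    case E1
    with adm have "J (Suc l) pol (Some (n, lam)) \<le> T1op p delta (W l) n lam" and "n \<noteq> 0"
      by (auto simp: Jval_Some_Suc T1op_def mult.commute add.commute intro!: add_right_mono Jval_le_W)
    then show ?thesis
      using T1_le_Top order_trans by blast
  next
    case EF
    then show ?thesis
      using TF_le_Top[of n] by (simp add: Jval_Some_Suc TFop_def)
  next
    case Stop
    with adm show ?thesis by simp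
  qed
  then show ?thesis
    unfolding Vdelta_l_def[of _ _ _ _ _ _ _ _ "Suc l"] by (rule SUP_least) simp
qed

lemma TF_le_W_Suc: "TFop p delta n \<le> W (Suc l) n lam"
  using Jval_le_W[OF adm_const_EF, of "Suc l"] by (simp add: Jval_Some_Suc TFop_def)

lemma T1_le_W_Suc:
  assumes "n \<noteq> 0"
  shows "T1op p delta (W l) n lam \<le> W (Suc l) n lam"
proof -
  have "J l pol (Some (n - 1, lam)) + ennreal (delta * p) \<le> W (Suc l) n lam"
    if "Adm False l pol (Some (n - 1, lam))" for pol
    using Jval_le_W[of "Suc l" "act_then E1 (\<lambda>_. pol)" n lam] assms that
    by (simp add: Jval_Some_Suc mult.commute add.commute)
  then show ?thesis
    unfolding T1op_def Vdelta_l_def[of _ _ _ _ _ _ _ _ l]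
    by (subst ennreal_SUP_add_left[symmetric]) (auto intro: adm_const_EF SUP_least)
qed

lemma T0_le_W_Suc_of_policies:
  assumes "\<And>m la. Adm False l (P m la) (Some (m, la))"
  shows "T0 (\<lambda>m la. J l (P m la) (Some (m, la))) n lam \<le> W (Suc l) n lam"
proof -
  define pol where "pol = act_then E0 (\<lambda>ob. case next0 p d ll delta n lam ob of
      None \<Rightarrow> (\<lambda>_. EF) | Some (m, la) \<Rightarrow> P m la)"
  have "Adm False (Suc l) pol (Some (n, lam))"
    using assms by (auto simp: pol_def adm_const_EF split: option.split)
  moreover have "T0 (\<lambda>m la. J l (P m la) (Some (m, la))) n lam = J (Suc l) pol (Some (n, lam))"
    unfolding T0op_def Jval_Some_Suc pol_def
    by (auto split: option.split intro!: arg_cong[where f = "Estep _ _ _ _ _ _ _"] ext)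
  ultimately show ?thesis
    using Jval_le_W by simp
qed

lemma exists_policy_above_approx_below:
  "\<exists>pol. Adm False l pol (Some (m, la)) \<and> approx_below k (W l m la) \<le> J l pol (Some (m, la))"
proof (cases "approx_below k (W l m la) = 0")
  case True
  then show ?thesis using adm_const_EF by auto
next
  case False
  then have "approx_below k (W l m la) < W l m la"
    by (simp add: approx_below_less)
  then show ?thesis
    unfolding Vdelta_l_def[of _ _ _ _ _ _ _ _ l] less_SUP_iff by (auto intro: less_imp_le)
qed

context
  assumes d: "d \<noteq> 0"
    and MU: "sigma_finite_measure MU" "sets MU = sets borel"
    and MY: "sigma_finite_measure MY" "sets MY = sets borel"
begin

lemma borel_measurable_snd_MU [measurable]: "snd \<in> borel_measurable (N \<Otimes>\<^sub>M MU)"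
  using measurable_compose[OF measurable_snd[of N MU] measurable_ident_sets[OF MU(2)]] by simp

lemma borel_measurable_snd_MY [measurable]: "snd \<in> borel_measurable (N \<Otimes>\<^sub>M MY)"
  using measurable_compose[OF measurable_snd[of N MY] measurable_ident_sets[OF MY(2)]] by simp

lemma T0op_SUP:
  assumes w: "\<And>k m. w k m \<in> borel_measurable borel" and inc: "\<And>m la. incseq (\<lambda>k. w k m la)"
  shows "T0 (\<lambda>m la. SUP k. w k m la) n lam = (SUP k. T0 (w k) n lam)"
  unfolding T0op_eq_Estep T0_integrand_SUP
proof (rule Estep_SUP[OF d MU(1) MY(1)])
  show "incseq (\<lambda>k. T0_integrand (w k) n lam ob)" for ob
    using inc by (auto simp: incseq_def intro!: T0_integrand_mono)
  show "(\<lambda>(t, u). T0_integrand (w k) n lam (1, t, u)) \<in> borel_measurable (lborel \<Otimes>\<^sub>M MU)" for k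
    using borel_measurable_T0_integrand_claim[OF w, of "\<lambda>_. lam" _ fst snd]
    by (simp add: split_beta')
  show "(\<lambda>(t, y). T0_integrand (w k) n lam (2, t, y)) \<in> borel_measurable (lborel \<Otimes>\<^sub>M MY)" for k
    using borel_measurable_T0_integrand_jump[OF w, of "\<lambda>_. lam" _ fst snd]
    by (simp add: split_beta')
qed

lemma borel_measurable_Top:
  assumes w: "\<And>m. w m \<in> borel_measurable borel"
  shows "TT w n \<in> borel_measurable borel"
proof -
  have [measurable]: "(\<lambda>lam. w (Suc n) (lamc d ll lam delta)) \<in> borel_measurable borel"
    by (rule measurable_compose[OF _ w]) measurable
  have [measurable]: "T0 w n \<in> borel_measurable borel"
    unfolding T0op_eq_Estep
  proof (rule borel_measurable_Estep[OF d MU(1) MY(1)])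
    show "(\<lambda>lam. T0_integrand w n lam (0, delta, 0)) \<in> borel_measurable borel"
      unfolding T0_integrand_no_event by measurable
    show "(\<lambda>x. T0_integrand w n (fst (fst x)) (1, snd (fst x), snd x))
        \<in> borel_measurable ((borel \<Otimes>\<^sub>M lborel) \<Otimes>\<^sub>M MU)"
      by (rule borel_measurable_T0_integrand_claim[OF w]) measurable
    show "(\<lambda>x. T0_integrand w n (fst (fst x)) (2, snd (fst x), snd x))
        \<in> borel_measurable ((borel \<Otimes>\<^sub>M lborel) \<Otimes>\<^sub>M MY)"
      by (rule borel_measurable_T0_integrand_jump[OF w]) measurable
  qed
  note [measurable] = w[of "n - 1"]
  show ?thesis
    unfolding Top_def T1op_def TFop_def by measurable
qed

lemma Top_SUP:
  assumes w: "\<And>k m. w k m \<in> borel_measurable borel" and inc: "\<And>m la. incseq (\<lambda>k. w k m la)"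
  shows "TT (\<lambda>m la. SUP k. w k m la) n lam = (SUP k. TT (w k) n lam)"
proof -
  have max_SUP: "max (SUP k. f k) (SUP k. g k) = (SUP k. max (f k) (g k))" for f g :: "nat \<Rightarrow> ennreal"
    using SUP_sup_distrib[where A = UNIV and f = f and g = g] by (simp add: sup_max)
  have max_SUP_const: "max (SUP k. f k) c = (SUP k. max (f k) c)" for f :: "nat \<Rightarrow> ennreal" and c
    using max_SUP[of f "\<lambda>_. c"] by simp
  have "T1op p delta (\<lambda>m la. SUP k. w k m la) n lam = (SUP k. T1op p delta (w k) n lam)"
    unfolding T1op_def by (simp add: ennreal_SUP_add_left)
  then show ?thesis
    unfolding Top_def T0op_SUP[OF w inc] by (simp only: max_SUP) (simp add: max_SUP_const)
qed

lemma T0_le_W_Suc: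
  assumes W_meas: "\<And>m. W l m \<in> borel_measurable borel"
  shows "T0 (W l) n lam \<le> W (Suc l) n lam"
proof -
  have "(\<lambda>la. approx_below k (W l m la)) \<in> borel_measurable borel" for k m
    using W_meas by measurable
  then have "T0 (\<lambda>m la. SUP k. approx_below k (W l m la)) n lam
      = (SUP k. T0 (\<lambda>m la. approx_below k (W l m la)) n lam)"
    by (rule T0op_SUP) (rule incseq_approx_below)
  also have "\<dots> \<le> W (Suc l) n lam"
  proof (rule SUP_least)
    fix k
    obtain P where P: "\<And>m la. Adm False l (P m la) (Some (m, la))"
      "\<And>m la. approx_below k (W l m la) \<le> J l (P m la) (Some (m, la))"
      using exists_policy_above_approx_below[of l _ _ k] by metis
    then have "T0 (\<lambda>m la. approx_below k (W l m la)) n lam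
        \<le> T0 (\<lambda>m la. J l (P m la) (Some (m, la))) n lam"
      by (intro T0op_mono)
    also have "\<dots> \<le> W (Suc l) n lam"
      using P(1) by (rule T0_le_W_Suc_of_policies)
    finally show "T0 (\<lambda>m la. approx_below k (W l m la)) n lam \<le> W (Suc l) n lam" .
  qed
  finally show ?thesis
    by (simp add: SUP_approx_below)
qed

lemma Top_le_W_Suc:
  assumes "\<And>m. W l m \<in> borel_measurable borel"
  shows "TT (W l) n lam \<le> W (Suc l) n lam"
  unfolding Top_def using T0_le_W_Suc[OF assms] T1_le_W_Suc TF_le_W_Suc by simp

lemma borel_measurable_W: "W l m \<in> borel_measurable borel"
proof (induction l arbitrary: m)
  case 0
  then show ?case by (simp add: W_0)
next
  case (Suc l)
  have "W (Suc l) m = TT (W l) m"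
    using W_Suc_le_Top Top_le_W_Suc[OF Suc.IH] by (intro ext antisym)
  then show ?case
    using borel_measurable_Top[OF Suc.IH] by simp
qed

lemma W_Suc_eq_Top: "W (Suc l) n lam = TT (W l) n lam"
  using W_Suc_le_Top Top_le_W_Suc[OF borel_measurable_W] by (rule antisym)

lemma Top_V_eq_V: "TT V n lam = V n lam"
proof -
  have "V = (\<lambda>m la. SUP l. W l m la)"
    using V_eq_SUP_W by blast
  then have "TT V n lam = (SUP l. TT (W l) n lam)"
    using Top_SUP[OF borel_measurable_W incseq_W] by simp
  also have "\<dots> = (SUP l. W (Suc l) n lam)"
    by (simp add: W_Suc_eq_Top)
  also have "\<dots> = V n lam"
  proof (rule antisym)
    show "(SUP l. W (Suc l) n lam) \<le> V n lam"
      by (rule SUP_least) (rule W_le_V)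
    show "V n lam \<le> (SUP l. W (Suc l) n lam)"
      unfolding V_eq_SUP_W by (rule SUP_mono) (blast intro: W_le_W_Suc)
  qed
  finally show ?thesis .
qed

end

end

theorem proposition6p4:
  fixes p q d beta ll delta :: real and MU MY :: "real measure"
  assumes "p > 0" "q > 0" "d > 0" "beta > 0" "ll \<ge> 0" "delta > 0"
    and "prob_space MU" "sets MU = sets borel" "AE u in MU. u > 0" "integrable MU (\<lambda>u. u)"
    and "prob_space MY" "sets MY = sets borel" "AE y in MY. y > 0" "integrable MY (\<lambda>y. y)"
    and "\<exists>eta > 0. p = (1 + eta) * (\<integral>u. u \<partial>MU) * (ll + beta * (\<integral>y. y \<partial>MY) / d)"
  shows "(\<forall>n lam. ll \<le> lam \<longrightarrow>
            (\<lambda>l. Vdelta_l p q d beta ll delta MU MY l n lam)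
              \<longlonglongrightarrow> Vdelta p q d beta ll delta MU MY n lam)
       \<and> (\<forall>n lam. ll \<le> lam \<longrightarrow>
            Top p q d beta ll delta MU MY (Vdelta p q d beta ll delta MU MY) n lam
              = Vdelta p q d beta ll delta MU MY n lam)"
proof (intro conjI allI impI)
  fix n lam
  show "(\<lambda>l. Vdelta_l p q d beta ll delta MU MY l n lam) \<longlonglongrightarrow> Vdelta p q d beta ll delta MU MY n lam"
    by (rule W_tendsto_V)
  have "sigma_finite_measure MU" "sigma_finite_measure MY"
    using assms(7,11) by (simp_all add: prob_space_imp_sigma_finite)
  then show "Top p q d beta ll delta MU MY (Vdelta p q d beta ll delta MU MY) n lam
      = Vdelta p q d beta ll delta MU MY n lam"
    using assms(3,8,12) by (intro Top_V_eq_V) auto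
qed

end
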